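(* Let inputs represent tuples of $C$ categorical components via a compositionally structured input representation with kernel value $\kappa_k$ for pairs of inputs sharing exactly $k$ components, where $\kappa_0<\kappa_k<\kappa_C$ for $0<k<C$. Pass these inputs through an infinite-width random neural network with (leaky) ReLU nonlinearity $\sigma(u)=A\min(u,0)+\max(u,0)$, $A\in[0,1)$, whose layer-$l$ kernel is given recursively by $K^{(0)}=K$ and $$K^{(l+1)}(x,x')=s^2\sqrt{K^{(l)}(x,x)K^{(l)}(x',x')}\;k\!\left(\frac{K^{(l)}(x,x')}{\sqrt{K^{(l)}(x,x)K^{(l)}(x',x')}}\right),\quad k(u)=\frac{(1-A)^2}{2\pi}\Big(\sqrt{1-u^2}+(\pi-\cos^{-1}u)\,u\Big)+Au,$$ with $s^2>0$ the weight variance. Let $S^{(L)}(k;C)$ denote the representational salience of overlap $k$ in layer $L$. Then as $L\to\infty$, $S^{(L)}(k;C)\to 0$ for every $k<C$ and $S^{(L)}(C;C)\to 1$.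
   Context: A representation is compositionally structured if the similarity of two inputs depends only on the number of shared components; each layer $K^{(l)}$ is then also compositionally structured, with similarity $\kappa^{(l)}_{|J|}$ for inputs sharing exactly the components in $J$. Representational salience of such a kernel: define recursively $\overline{S}(\emptyset):=\kappa_0$, $\overline{S}(J):=\kappa_{|J|}-\sum_{J'\subsetneq J}\overline{S}(J')$ for $J\subseteq\{1,\dots,C\}$, and $S(J):=\overline{S}(J)/\sum_{\emptyset\ne J'\subseteq\{1,\dots,C\}}\overline{S}(J')$; since this depends only on $|J|$, write $S(k;C):=S(J)$ for $|J|=k$. *)

theory Defs
  imports "HOL-Analysis.Analysis"
begin

definition karc :: "real \<Rightarrow> real \<Rightarrow> real" where
  "karc A u = (1 - A)^2 / (2 * pi) * (sqrt (1 - u^2) + (pi - arccos u) * u) + A * u"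

text \<open>The diagonal value K(x,x) equals \<kappa>_C for every input x,
  so the general recursion for K^(l+1) becomes the following recursion on the
  overlap values.\<close>
fun kappa_layer :: "real \<Rightarrow> real \<Rightarrow> nat \<Rightarrow> (nat \<Rightarrow> real) \<Rightarrow> nat \<Rightarrow> nat \<Rightarrow> real" where
  "kappa_layer A s2 C \<kappa> 0 k = \<kappa> k"
| "kappa_layer A s2 C \<kappa> (Suc l) k =
     s2 * sqrt (kappa_layer A s2 C \<kappa> l C * kappa_layer A s2 C \<kappa> l C)
        * karc A (kappa_layer A s2 C \<kappa> l k
                   / sqrt (kappa_layer A s2 C \<kappa> l C * kappa_layer A s2 C \<kappa> l C))"

function sbar :: "(nat \<Rightarrow> real) \<Rightarrow> nat set \<Rightarrow> real" where
  "sbar \<kappa> J = (if finite J then \<kappa> (card J) - (\<Sum>J'\<in>{J'. J' \<subset> J}. sbar \<kappa> J') else 0)"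
  by auto
termination
  by (relation "Wellfounded.measure (\<lambda>(\<kappa>, J). card J)")
     (auto intro: psubset_card_mono)

definition salience :: "(nat \<Rightarrow> real) \<Rightarrow> nat \<Rightarrow> nat set \<Rightarrow> real" where
  "salience \<kappa> C J = sbar \<kappa> J / (\<Sum>J'\<in>{J'. J' \<subseteq> {1..C} \<and> J' \<noteq> {}}. sbar \<kappa> J')"

end

(*
  Up to the factor (1 + A^2)/2, the arc-cosine kernel is the map
  u \<mapsto> u + g (sqrt (1 - u^2) - u arccos u) with 0 < g \<le> 1/pi.  As 1 is a fixed point
  of this map, the diagonal kernel value merely grows geometrically, and the layer kernel
  normalised by it evolves by iterating the map.  The map is monotone on [-1, 1], pushes
  every u < 1 strictly towards 1 and is tangent to the identity at 1; hence the gaps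
  1 - u of any two normalised overlaps become asymptotically equal.  The salience of J
  is, up to sign, the S-bar of the gaps relative to the gap of overlap 0, and these
  relative gaps tend to 1 for every k < C.  As S-bar of a constant vanishes on nonempty
  sets, every proper J loses its salience, and since the saliences always sum to 1,
  the full set takes all of it.
*)

theory Submission
  imports Defs
begin

definition arc_excess :: "real \<Rightarrow> real" where
  "arc_excess u = sqrt (1 - u^2) - u * arccos u"

lemma continuous_on_arc_excess: "continuous_on {-1..1} arc_excess"
  unfolding arc_excess_def
  by (intro continuous_intros continuous_on_arccos'[THEN continuous_on_subset]) auto

lemma has_real_derivative_arc_excess:
  assumes "-1 < z" "z < 1"
  shows "(arc_excess has_real_derivative - arccos z) (at z)"
proof -
  have "sqrt (1 - z^2) > 0"
    using assms by (simp add: abs_square_less_1)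
  then show ?thesis
    unfolding arc_excess_def using assms
    by (auto intro!: derivative_eq_intros simp: field_simps)
qed

lemma arc_excess_mean_value:
  assumes "-1 \<le> u" "u < v" "v \<le> 1"
  obtains z where "u < z" "z < v" "arc_excess u - arc_excess v = (v - u) * arccos z"
proof -
  have "continuous_on {u..v} arc_excess"
    using continuous_on_arc_excess by (rule continuous_on_subset) (use assms in auto)
  moreover have "(arc_excess has_derivative (*) (- arccos z)) (at z)" if "u < z" "z < v" for z
    using has_real_derivative_arc_excess[THEN has_field_derivative_imp_has_derivative] that assms
    by simp
  ultimately obtain z where z: "u < z" "z < v" "arc_excess v - arc_excess u = - arccos z * (v - u)"
    using mvt[OF assms(2), of arc_excess "\<lambda>z. (*) (- arccos z)"] by blast
  then have "arc_excess u - arc_excess v = (v - u) * arccos z"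
    by (simp add: algebra_simps)
  with z(1,2) show thesis
    by (rule that)
qed

lemma arc_excess_one: "arc_excess 1 = 0"
  by (simp add: arc_excess_def)

lemma arc_excess_bounds:
  assumes "-1 \<le> u" "u < 1"
  shows "0 < arc_excess u" "arc_excess u < pi * (1 - u)"
proof -
  obtain z where z: "u < z" "z < 1" "arc_excess u = (1 - u) * arccos z"
    using arc_excess_mean_value[OF assms order_refl] by (auto simp: arc_excess_one)
  have "0 < arccos z" "arccos z < pi"
    using arccos_less_arccos[of z 1] arccos_less_arccos[of "-1" z] z assms by auto
  then show "0 < arc_excess u" "arc_excess u < pi * (1 - u)"
    using z(3) assms by simp_all
qed

lemma arc_excess_le_sqrt:
  assumes "0 \<le> u" "u \<le> 1"
  shows "arc_excess u \<le> sqrt (1 - u^2) * (1 - u)"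
proof -
  have "sqrt (1 - u^2) = sin (arccos u)"
    using assms by (simp add: sin_arccos)
  also have "\<dots> \<le> arccos u"
    using assms arccos_lbound by (intro sin_x_le_x) auto
  finally have "u * sqrt (1 - u^2) \<le> u * arccos u"
    using assms by (simp add: mult_left_mono)
  then show ?thesis
    unfolding arc_excess_def by (simp add: algebra_simps)
qed

definition arc_map :: "real \<Rightarrow> real \<Rightarrow> real" where
  "arc_map g u = u + g * arc_excess u"

definition arc_gain :: "real \<Rightarrow> real" where
  "arc_gain A = (1 - A)^2 / (pi * (1 + A^2))"

lemma karc_eq_arc_map: "karc A u = (1 + A^2) / 2 * arc_map (arc_gain A) u"
proof -
  define P where "P = 1 + A^2"
  have "0 < P"
    unfolding P_def by (intro add_pos_nonneg) auto
  have "karc A u = (1 - A)^2 / (2 * pi) * arc_excess u + P / 2 * u"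
    unfolding karc_def arc_excess_def P_def by (simp add: field_simps power2_eq_square)
  also have "(1 - A)^2 / (2 * pi) = P / 2 * ((1 - A)^2 / (pi * P))"
    using \<open>0 < P\<close> by simp
  finally show ?thesis
    unfolding arc_map_def arc_gain_def P_def by (simp only: distrib_left mult.assoc add.commute)
qed

lemma arc_gain_bounds:
  assumes "0 \<le> A" "A < 1"
  shows "0 < arc_gain A" "arc_gain A \<le> 1 / pi"
proof -
  have "0 < 1 + A^2" "(1 - A)^2 \<le> 1 + A^2"
    using assms by (auto intro: add_pos_nonneg simp: power2_eq_square algebra_simps)
  then have pos: "0 < (1 - A)^2 / (1 + A^2)" and le: "(1 - A)^2 / (1 + A^2) \<le> 1"
    using assms by auto
  have gain: "arc_gain A = (1 - A)^2 / (1 + A^2) / pi"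
    unfolding arc_gain_def by (simp add: mult.commute)
  show "0 < arc_gain A"
    unfolding gain by (rule divide_pos_pos[OF pos pi_gt_zero])
  show "arc_gain A \<le> 1 / pi"
    unfolding gain by (rule divide_right_mono[OF le]) simp
qed

lemma funpow_arc_map_one: "(arc_map g ^^ n) 1 = 1"
  by (induction n) (simp_all add: arc_map_def arc_excess_one)

locale tangent_attractor =
  fixes f :: "real \<Rightarrow> real"
  assumes mono_on: "-1 \<le> u \<Longrightarrow> u \<le> v \<Longrightarrow> v \<le> 1 \<Longrightarrow> f u \<le> f v"
    and gt_self: "-1 \<le> u \<Longrightarrow> u < 1 \<Longrightarrow> u < f u"
    and less_one: "-1 \<le> u \<Longrightarrow> u < 1 \<Longrightarrow> f u < 1"
    and continuous: "continuous_on {-1..1} f"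
    and tangent_at_one: "((\<lambda>x. (1 - f x) / (1 - x)) \<longlongrightarrow> 1) (at_left 1)"

context tangent_attractor
begin

lemma iterate_bounds:
  assumes "-1 \<le> u" "u < 1"
  shows "-1 \<le> (f ^^ n) u \<and> (f ^^ n) u < 1"
proof (induction n)
  case (Suc n)
  then show ?case
    using gt_self[of "(f ^^ n) u"] less_one[of "(f ^^ n) u"] by simp
qed (use assms in simp)

lemma iterate_mono:
  assumes "-1 \<le> u" "u \<le> v" "v < 1"
  shows "(f ^^ n) u \<le> (f ^^ n) v"
proof (induction n)
  case (Suc n)
  then show ?case
    using mono_on iterate_bounds[of u n] iterate_bounds[of v n] assms by simp
qed (use assms in simp)

lemma incseq_iterate:
  assumes "-1 \<le> u" "u < 1"
  shows "incseq (\<lambda>n. (f ^^ n) u)"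
  using gt_self iterate_bounds[OF assms] by (intro incseq_SucI) (simp add: less_imp_le)

lemma iterate_tendsto_one:
  assumes "-1 \<le> u" "u < 1"
  shows "(\<lambda>n. (f ^^ n) u) \<longlonglongrightarrow> 1"
proof -
  let ?x = "\<lambda>n. (f ^^ n) u"
  obtain l where l: "?x \<longlonglongrightarrow> l"
    using incseq_convergent[OF incseq_iterate[OF assms], of 1] iterate_bounds[OF assms]
    by (meson less_imp_le)
  have "-1 \<le> l" "l \<le> 1"
    using iterate_bounds[OF assms] by (auto intro: LIMSEQ_le_const[OF l] LIMSEQ_le_const2[OF l] less_imp_le)
  have "(\<lambda>n. f (?x n)) \<longlonglongrightarrow> f l"
    using \<open>-1 \<le> l\<close> \<open>l \<le> 1\<close> iterate_bounds[OF assms]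
    by (intro continuous_on_tendsto_compose[OF continuous l]) (auto simp: less_imp_le)
  then have "(\<lambda>n. ?x (Suc n)) \<longlonglongrightarrow> f l"
    by simp
  then have "f l = l"
    using LIMSEQ_unique LIMSEQ_Suc[OF l] by blast
  then show ?thesis
    using l gt_self[OF \<open>-1 \<le> l\<close>] \<open>l \<le> 1\<close> by (cases "l < 1") auto
qed

lemma iterate_gap_ratio_Suc:
  assumes "-1 \<le> u" "u < 1"
  shows "(\<lambda>n. (1 - (f ^^ Suc n) u) / (1 - (f ^^ n) u)) \<longlonglongrightarrow> 1"
proof -
  have "filterlim (\<lambda>n. (f ^^ n) u) (at_left 1) sequentially"
    using iterate_bounds[OF assms] iterate_tendsto_one[OF assms]
    by (intro tendsto_imp_filterlim_at_left) auto
  then show ?thesis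
    using filterlim_compose[OF tangent_at_one] by simp
qed

lemma iterate_gap_ratio_shift:
  assumes "-1 \<le> u" "u < 1"
  shows "(\<lambda>n. (1 - (f ^^ (n + m)) u) / (1 - (f ^^ n) u)) \<longlonglongrightarrow> 1"
proof -
  let ?gap = "\<lambda>n. 1 - (f ^^ n) u"
  have "(\<lambda>n. \<Prod>i<m. ?gap (Suc (n + i)) / ?gap (n + i)) \<longlonglongrightarrow> (\<Prod>i<m. 1)"
    using LIMSEQ_ignore_initial_segment[OF iterate_gap_ratio_Suc[OF assms]]
    by (intro tendsto_prod) (simp add: add.commute)
  moreover have "(\<Prod>i<m. ?gap (Suc (n + i)) / ?gap (n + i)) = ?gap (n + m) / ?gap n" for n
    using prod_lessThan_telescope[of m "\<lambda>i. ?gap (n + i)"] iterate_bounds[OF assms]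
    by (simp add: less_imp_neq)
  ultimately show ?thesis
    by simp
qed

lemma iterate_gap_ratio:
  assumes "-1 \<le> u" "u \<le> v" "v < 1"
  shows "(\<lambda>n. (1 - (f ^^ n) v) / (1 - (f ^^ n) u)) \<longlonglongrightarrow> 1"
proof -
  have u: "-1 \<le> u" "u < 1"
    using assms by simp_all
  \<comment> \<open>Some iterate of u overtakes v, so the gap at v is squeezed between the gaps of u
    at times n + m and n.\<close>
  have "\<forall>\<^sub>F n in sequentially. v < (f ^^ n) u"
    using order_tendstoD(1)[OF iterate_tendsto_one[OF u] assms(3)] .
  then obtain m where "v < (f ^^ m) u"
    unfolding eventually_sequentially by blast
  then have "(f ^^ n) v \<le> (f ^^ (n + m)) u" for n
    using iterate_mono[of v "(f ^^ m) u" n] iterate_bounds[OF u, of m] assms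
    by (simp add: funpow_add)
  moreover have gap_pos: "0 < 1 - (f ^^ n) u" for n
    using iterate_bounds[OF u] by simp
  ultimately have lower:
      "(1 - (f ^^ (n + m)) u) / (1 - (f ^^ n) u) \<le> (1 - (f ^^ n) v) / (1 - (f ^^ n) u)" for n
    by (intro divide_right_mono) (auto simp: less_imp_le)
  have upper: "(1 - (f ^^ n) v) / (1 - (f ^^ n) u) \<le> 1" for n
    using iterate_mono[OF assms] gap_pos by (simp add: pos_divide_le_eq)
  show ?thesis
    using lower upper
    by (intro tendsto_sandwich[OF _ _ iterate_gap_ratio_shift[OF u, of m] tendsto_const]
        always_eventually allI)
qed

end

lemma tangent_attractor_arc_map:
  assumes "0 < g" "g \<le> 1 / pi"
  shows "tangent_attractor (arc_map g)"
proof
  fix u v :: real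
  assume u: "-1 \<le> u" and uv: "u \<le> v" and v: "v \<le> 1"
  show "arc_map g u \<le> arc_map g v"
  proof (cases "u = v")
    case False
    then obtain z where z: "u < z" "z < v" "arc_excess u - arc_excess v = (v - u) * arccos z"
      using arc_excess_mean_value u uv v by (metis order_le_less)
    have "g * arccos z \<le> g * pi"
      using assms arccos_ubound[of z] z u v by (intro mult_left_mono) auto
    also have "\<dots> \<le> 1"
      using assms by (simp add: field_simps)
    finally have "g * (arc_excess u - arc_excess v) \<le> v - u"
      unfolding z(3) using uv by (metis mult.left_commute mult_left_le diff_ge_0_iff_ge)
    then show ?thesis
      unfolding arc_map_def right_diff_distrib by linarith
  qed simp
next
  fix u :: real
  assume u: "-1 \<le> u" "u < 1"
  show "u < arc_map g u"
    unfolding arc_map_def using assms arc_excess_bounds[OF u] by simp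
  have "g * arc_excess u \<le> arc_excess u / pi"
    using assms arc_excess_bounds[OF u] by (simp add: field_simps mult_right_mono)
  also have "\<dots> < 1 - u"
    using arc_excess_bounds[OF u] by (simp add: field_simps)
  finally show "arc_map g u < 1"
    unfolding arc_map_def by simp
next
  show "continuous_on {-1..1} (arc_map g)"
    unfolding arc_map_def by (intro continuous_intros continuous_on_arc_excess)
  have "((\<lambda>x. 1 - g * sqrt (1 - x^2)) \<longlongrightarrow> 1 - g * sqrt (1 - 1^2)) (at_left 1)"
    by (intro tendsto_intros)
  then have lower: "((\<lambda>x. 1 - g * sqrt (1 - x^2)) \<longlongrightarrow> 1) (at_left 1)"
    by simp
  show "((\<lambda>x. (1 - arc_map g x) / (1 - x)) \<longlongrightarrow> 1) (at_left 1)"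
  proof (rule tendsto_sandwich[OF _ _ lower tendsto_const])
    show "\<forall>\<^sub>F x in at_left 1. 1 - g * sqrt (1 - x^2) \<le> (1 - arc_map g x) / (1 - x)"
      using eventually_at_left_real[OF zero_less_one]
    proof eventually_elim
      case (elim x)
      then have "g * arc_excess x \<le> g * (sqrt (1 - x^2) * (1 - x))"
        using assms arc_excess_le_sqrt[of x] by (intro mult_left_mono) auto
      then show ?case
        using elim by (simp add: arc_map_def field_simps)
    qed
    show "\<forall>\<^sub>F x in at_left 1. (1 - arc_map g x) / (1 - x) \<le> 1"
      using eventually_at_left_real[OF zero_less_one]
    proof eventually_elim
      case (elim x)
      then show ?case
        using assms arc_excess_bounds[of x] by (simp add: arc_map_def field_simps)
    qed
  qed
qed

declare sbar.simps[simp del]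

lemma sbar_eq: "finite J \<Longrightarrow> sbar \<mu> J = \<mu> (card J) - (\<Sum>J'\<in>{J'. J' \<subset> J}. sbar \<mu> J')"
  by (simp add: sbar.simps)

lemma finite_psubsets: "finite J \<Longrightarrow> finite {J'. J' \<subset> J}"
  by (rule finite_subset[of _ "Pow J"]) auto

lemma sbar_empty: "sbar \<mu> {} = \<mu> 0"
  by (simp add: sbar_eq)

lemma sum_sbar_subsets:
  assumes "finite S"
  shows "(\<Sum>J\<in>{J. J \<subseteq> S}. sbar \<mu> J) = \<mu> (card S)"
proof -
  have "{J. J \<subseteq> S} = insert S {J. J \<subset> S}"
    by auto
  then show ?thesis
    using sbar_eq[OF assms, of \<mu>] finite_psubsets[OF assms] by simp
qed

lemma sbar_affine:
  assumes "finite J"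
  shows "sbar (\<lambda>k. a + b * \<mu> k) J = (if J = {} then a else 0) + b * sbar \<mu> J"
  using assms
proof (induction J rule: finite_psubset_induct)
  case (psubset J)
  have "(\<Sum>J'\<in>{J'. J' \<subset> J}. sbar (\<lambda>k. a + b * \<mu> k) J')
      = (\<Sum>J'\<in>{J'. J' \<subset> J}. (if J' = {} then a else 0)) + b * (\<Sum>J'\<in>{J'. J' \<subset> J}. sbar \<mu> J')"
    using psubset.IH by (simp add: sum.distrib sum_distrib_left)
  also have "(\<Sum>J'\<in>{J'. J' \<subset> J}. (if J' = {} then a else 0)) = (if J = {} then 0 else a)"
    using finite_psubsets[OF psubset.hyps] by (simp add: sum.delta psubset_eq)
  finally show ?case
    using sbar_eq[OF psubset.hyps, of \<mu>] sbar_eq[OF psubset.hyps, of "\<lambda>k. a + b * \<mu> k"]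
    by (simp add: right_diff_distrib)
qed

lemma sbar_const: "finite J \<Longrightarrow> J \<noteq> {} \<Longrightarrow> sbar (\<lambda>_. c) J = 0"
  using sbar_affine[of J c 0] by simp

lemma sbar_tendsto:
  assumes "finite J" "\<And>k. k \<le> card J \<Longrightarrow> (\<lambda>n. \<mu> n k) \<longlonglongrightarrow> \<nu> k"
  shows "(\<lambda>n. sbar (\<mu> n) J) \<longlonglongrightarrow> sbar \<nu> J"
  using assms
proof (induction J rule: finite_psubset_induct)
  case (psubset J)
  have "(\<lambda>n. sbar (\<mu> n) J') \<longlonglongrightarrow> sbar \<nu> J'" if "J' \<subset> J" for J'
    using that psubset.prems psubset_card_mono[OF psubset.hyps that]
    by (intro psubset.IH) auto
  then have "(\<lambda>n. \<mu> n (card J) - (\<Sum>J'\<in>{J'. J' \<subset> J}. sbar (\<mu> n) J'))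
      \<longlonglongrightarrow> \<nu> (card J) - (\<Sum>J'\<in>{J'. J' \<subset> J}. sbar \<nu> J')"
    using psubset.prems by (intro tendsto_diff tendsto_sum) auto
  then show ?case
    using sbar_eq[OF psubset.hyps] by simp
qed

lemma sum_sbar_nonempty_subsets:
  "(\<Sum>J\<in>{J. J \<subseteq> {1..C} \<and> J \<noteq> {}}. sbar \<mu> J) = \<mu> C - \<mu> 0"
proof -
  have "{J. J \<subseteq> {1..C} \<and> J \<noteq> {}} = {J. J \<subseteq> {1..C}} - {{}}"
    by auto
  then show ?thesis
    using sum_sbar_subsets[of "{1..C}" \<mu>] by (simp add: sum_diff1 sbar_empty)
qed

lemma salience_eq: "salience \<mu> C J = sbar \<mu> J / (\<mu> C - \<mu> 0)"
  unfolding salience_def sum_sbar_nonempty_subsets ..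

lemma sum_salience:
  assumes "\<mu> C \<noteq> \<mu> 0"
  shows "(\<Sum>J\<in>{J. J \<subseteq> {1..C} \<and> J \<noteq> {}}. salience \<mu> C J) = 1"
  unfolding salience_eq sum_divide_distrib[symmetric] sum_sbar_nonempty_subsets using assms by simp

lemma salience_eq_sbar_gap:
  assumes "finite J" "J \<noteq> {}"
  shows "salience \<mu> C J = - sbar (\<lambda>k. (\<mu> C - \<mu> k) / (\<mu> C - \<mu> 0)) J"
proof -
  define d where "d = \<mu> C - \<mu> 0"
  have "sbar (\<lambda>k. (\<mu> C - \<mu> k) / d) J = sbar (\<lambda>k. \<mu> C / d + (- 1 / d) * \<mu> k) J"
    by (simp add: diff_divide_distrib)
  also have "\<dots> = - sbar \<mu> J / d"
    using sbar_affine[OF assms(1), of "\<mu> C / d" "- 1 / d" \<mu>] assms(2) by simp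
  finally show ?thesis
    by (simp add: salience_eq d_def)
qed

lemma salience_tendsto_zero:
  fixes \<mu> :: "nat \<Rightarrow> nat \<Rightarrow> real"
  assumes gaps: "\<And>k. k < C \<Longrightarrow> (\<lambda>n. (\<mu> n C - \<mu> n k) / (\<mu> n C - \<mu> n 0)) \<longlonglongrightarrow> 1"
    and J: "J \<subseteq> {1..C}" "J \<noteq> {}" "card J < C"
  shows "(\<lambda>n. salience (\<mu> n) C J) \<longlonglongrightarrow> 0"
proof -
  have "finite J"
    using J(1) finite_subset by blast
  then have "(\<lambda>n. sbar (\<lambda>k. (\<mu> n C - \<mu> n k) / (\<mu> n C - \<mu> n 0)) J) \<longlonglongrightarrow> sbar (\<lambda>_. 1) J"
    using gaps J(3) by (intro sbar_tendsto) auto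
  then show ?thesis
    using tendsto_minus salience_eq_sbar_gap[OF \<open>finite J\<close> J(2)] sbar_const[OF \<open>finite J\<close> J(2)]
    by fastforce
qed

lemma salience_full_tendsto_one:
  fixes \<mu> :: "nat \<Rightarrow> nat \<Rightarrow> real"
  assumes "\<And>n. \<mu> n C \<noteq> \<mu> n 0"
    and gaps: "\<And>k. k < C \<Longrightarrow> (\<lambda>n. (\<mu> n C - \<mu> n k) / (\<mu> n C - \<mu> n 0)) \<longlonglongrightarrow> 1"
  shows "(\<lambda>n. salience (\<mu> n) C {1..C}) \<longlonglongrightarrow> 1"
proof -
  define P where "P = {J. J \<subset> {1..C} \<and> J \<noteq> {}}"
  have "C \<noteq> 0"
    using assms(1) by metis
  then have "{J. J \<subseteq> {1..C} \<and> J \<noteq> {}} = insert {1..C} P" "{1..C} \<notin> P"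
    unfolding P_def by auto
  moreover have "finite P"
    unfolding P_def by (rule finite_subset[OF _ finite_psubsets[of "{1..C}"]]) auto
  ultimately have "salience (\<mu> n) C {1..C} = 1 - (\<Sum>J\<in>P. salience (\<mu> n) C J)" for n
    using sum_salience[of "\<mu> n", OF assms(1)] by (simp add: algebra_simps)
  moreover have "(\<lambda>n. 1 - (\<Sum>J\<in>P. salience (\<mu> n) C J)) \<longlonglongrightarrow> 1 - (\<Sum>J\<in>P. 0)"
    using psubset_card_mono[of "{1..C}"]
    by (intro tendsto_intros salience_tendsto_zero[OF gaps]) (auto simp: P_def)
  ultimately show ?thesis
    by simp
qed

lemma kappa_layer_eq_funpow_arc_map:
  assumes "0 < \<kappa> C" "0 < s2"
  shows "kappa_layer A s2 C \<kappa> L k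
    = \<kappa> C * (s2 * (1 + A^2) / 2) ^ L * (arc_map (arc_gain A) ^^ L) (\<kappa> k / \<kappa> C)"
proof (induction L arbitrary: k)
  case 0
  then show ?case
    using assms by simp
next
  case (Suc L)
  let ?c = "\<kappa> C * (s2 * (1 + A^2) / 2) ^ L"
  have "0 < ?c"
    using assms by (simp add: add_pos_nonneg)
  moreover have "kappa_layer A s2 C \<kappa> L C = ?c"
    using Suc[of C] assms by (simp add: funpow_arc_map_one)
  ultimately show ?case
    by (simp add: Suc[of k] karc_eq_arc_map)
qed

lemma kappa_layer_diagonal_gap:
  assumes "0 < \<kappa> C" "0 < s2"
  shows "kappa_layer A s2 C \<kappa> L C - kappa_layer A s2 C \<kappa> L k
    = \<kappa> C * (s2 * (1 + A^2) / 2) ^ L * (1 - (arc_map (arc_gain A) ^^ L) (\<kappa> k / \<kappa> C))"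
  using kappa_layer_eq_funpow_arc_map[of \<kappa> C s2 A L, OF assms] assms
  by (simp add: funpow_arc_map_one right_diff_distrib)

lemma compositional_kernel_abs_le:
  fixes \<phi> :: "(nat \<Rightarrow> 'v) \<Rightarrow> 'h::real_inner"
  assumes categorical: "\<forall>i\<in>{1..C}. \<exists>a b. a \<in> V i \<and> b \<in> V i \<and> a \<noteq> b"
    and comp_struct: "\<forall>x\<in>PiE {1..C} V. \<forall>x'\<in>PiE {1..C} V.
           inner (\<phi> x) (\<phi> x') = \<kappa> (card {i\<in>{1..C}. x i = x' i})"
  shows "\<bar>\<kappa> 0\<bar> \<le> \<kappa> C"
proof -
  obtain a b where ab: "\<forall>i\<in>{1..C}. a i \<in> V i \<and> b i \<in> V i \<and> a i \<noteq> b i"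
    using categorical by metis
  define x where "x = restrict a {1..C}"
  define y where "y = restrict b {1..C}"
  have x: "x \<in> PiE {1..C} V" and y: "y \<in> PiE {1..C} V"
    using ab unfolding x_def y_def by auto
  have disjoint: "{i\<in>{1..C}. x i = y i} = {}"
    using ab unfolding x_def y_def by auto
  have "inner (\<phi> x) (\<phi> y) = \<kappa> 0"
    using comp_struct[rule_format, OF x y] unfolding disjoint by simp
  have diagonal: "{i\<in>{1..C}. z i = z i} = {1..C}" for z :: "nat \<Rightarrow> 'v"
    by auto
  have "inner (\<phi> x) (\<phi> x) = \<kappa> C" "inner (\<phi> y) (\<phi> y) = \<kappa> C"
    using comp_struct[rule_format, OF x x] comp_struct[rule_format, OF y y]
    unfolding diagonal by simp_all
  with \<open>inner (\<phi> x) (\<phi> y) = \<kappa> 0\<close> show ?thesis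
    using Cauchy_Schwarz_ineq2[of "\<phi> x" "\<phi> y"] inner_ge_zero[of "\<phi> x"]
    by (simp add: norm_eq_sqrt_inner)
qed

theorem proposition4:
  fixes C :: nat and V :: "nat \<Rightarrow> 'v set" and \<phi> :: "(nat \<Rightarrow> 'v) \<Rightarrow> 'h::real_inner"
    and \<kappa> :: "nat \<Rightarrow> real" and A s2 :: real
  assumes C_pos: "C \<ge> 1"
    and categorical: "\<forall>i\<in>{1..C}. \<exists>a b. a \<in> V i \<and> b \<in> V i \<and> a \<noteq> b"
    and comp_struct: "\<forall>x\<in>PiE {1..C} V. \<forall>x'\<in>PiE {1..C} V.
           inner (\<phi> x) (\<phi> x') = \<kappa> (card {i\<in>{1..C}. x i = x' i})"
    and between: "\<forall>k. 0 < k \<and> k < C \<longrightarrow> \<kappa> 0 < \<kappa> k \<and> \<kappa> k < \<kappa> C"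
    and ends: "\<kappa> 0 < \<kappa> C"
    and A: "0 \<le> A" "A < 1"
    and s2: "s2 > 0"
  shows "(\<forall>J. J \<subseteq> {1..C} \<and> J \<noteq> {} \<and> card J < C \<longrightarrow>
            (\<lambda>L. salience (kappa_layer A s2 C \<kappa> L) C J) \<longlonglongrightarrow> 0)
       \<and> (\<lambda>L. salience (kappa_layer A s2 C \<kappa> L) C {1..C}) \<longlonglongrightarrow> 1"
proof -
  let ?K = "kappa_layer A s2 C \<kappa>"
  define F where "F = arc_map (arc_gain A)"
  define \<rho> where "\<rho> k = \<kappa> k / \<kappa> C" for k
  define c where "c L = \<kappa> C * (s2 * (1 + A^2) / 2) ^ L" for L :: nat
  have "\<bar>\<kappa> 0\<bar> \<le> \<kappa> C"
    by (rule compositional_kernel_abs_le[OF categorical comp_struct])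
  then have "0 < \<kappa> C"
    using ends by linarith
  interpret tangent_attractor F
    unfolding F_def using tangent_attractor_arc_map arc_gain_bounds A by blast
  have \<rho>: "-1 \<le> \<rho> 0" "\<rho> 0 \<le> \<rho> k" "\<rho> k < 1" if "k < C" for k
  proof -
    have "\<kappa> 0 \<le> \<kappa> k \<and> \<kappa> k < \<kappa> C"
      using between ends that by (cases "k = 0") auto
    then show "-1 \<le> \<rho> 0" "\<rho> 0 \<le> \<rho> k" "\<rho> k < 1"
      using \<open>\<bar>\<kappa> 0\<bar> \<le> \<kappa> C\<close> \<open>0 < \<kappa> C\<close> unfolding \<rho>_def by (auto simp: field_simps)
  qed
  have diagonal_gap: "?K L C - ?K L k = c L * (1 - (F ^^ L) (\<rho> k))" and "0 < c L" for L k
    unfolding c_def F_def \<rho>_def using kappa_layer_diagonal_gap \<open>0 < \<kappa> C\<close> s2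
    by (auto simp: add_pos_nonneg)
  have nondegenerate: "?K L C \<noteq> ?K L 0" for L
    using diagonal_gap[of L 0] \<open>0 < c L\<close> iterate_bounds[of "\<rho> 0" L] \<rho>(1,3)[of 0] C_pos
    by auto
  have gaps: "(\<lambda>L. (?K L C - ?K L k) / (?K L C - ?K L 0)) \<longlonglongrightarrow> 1" if "k < C" for k
    unfolding diagonal_gap using \<open>\<And>L. 0 < c L\<close>[THEN less_imp_neq] iterate_gap_ratio \<rho>[OF that]
    by simp
  show ?thesis
    using salience_tendsto_zero[OF gaps] salience_full_tendsto_one[OF nondegenerate gaps] by blast
qed

end
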